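(* Let $k>0$, let $\lambda$ be a $k$-ineffable$'$ cardinal, and let $g:\lambda^k\to\lambda^k$. Then there exists an infinite set $B\subseteq\lambda$ such that $g$ has at most $\mathrm{ot}(k)$ regressive values on $B^k$.
   Context: Ordinals are von Neumann ordinals, ordered by $<$. For $x\in\lambda^k$, $\min(x)$ and $|x|$ are the least and greatest coordinates; $y$ is a regressive value of $g$ on $B^k$ iff $y=g(x)$ for some $x\in B^k$ with $|y|<\min(x)$. $S_k(X)$ is the set of $k$-element subsets of $X$. A function $f:S_k(\lambda)\to\lambda$ is regressive iff for all $A\in S_k(\lambda)$, $f(A)<\min(A)$ or $\min(A)=0$. $\lambda$ is $k$-ineffable$'$ iff $\lambda$ is an infinite cardinal and for every regressive $f:S_k(\lambda)\to\lambda$ there exists a stationary $A\subseteq\lambda$ such that $f$ is constant on $S_k(A)$. $\mathrm{ot}(k)$ is the number of order types of elements of $\mathbb{N}^k$, where $x,y$ have the same order type iff $x_i<x_j\Leftrightarrow y_i<y_j$ for all $i,j$. *)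

theory Defs
  imports Main "HOL-Library.Equipollence"
begin

text \<open>The infinite cardinal lambda is represented by a well-ordered type 'a
  (its elements are the ordinals below lambda).\<close>

definition ord_zero :: "'a::wellorder" where
  "ord_zero = (LEAST x. True)"

definition is_limit :: "'a::wellorder \<Rightarrow> bool" where
  "is_limit a \<longleftrightarrow> a \<noteq> ord_zero \<and> (\<forall>b<a. \<exists>c. b < c \<and> c < a)"

definition club :: "'a::wellorder set \<Rightarrow> bool" where
  "club C \<longleftrightarrow> (\<forall>a. \<exists>b\<in>C. a \<le> b) \<and>
     (\<forall>a. is_limit a \<and> (\<forall>b<a. \<exists>c\<in>C. b \<le> c \<and> c < a) \<longrightarrow> a \<in> C)"

definition stationary :: "'a::wellorder set \<Rightarrow> bool" where
  "stationary A \<longleftrightarrow> (\<forall>C. club C \<longrightarrow> A \<inter> C \<noteq> {})"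

definition is_infinite_cardinal :: "'a::wellorder itself \<Rightarrow> bool" where
  "is_infinite_cardinal _ \<longleftrightarrow> infinite (UNIV :: 'a set) \<and>
     (\<forall>x::'a. \<not> ({y. y < x} \<approx> (UNIV :: 'a set)))"

definition S_k :: "nat \<Rightarrow> 'a set \<Rightarrow> 'a set set" where
  "S_k k X = {A. A \<subseteq> X \<and> finite A \<and> card A = k}"

definition regressive_S :: "nat \<Rightarrow> ('a::wellorder set \<Rightarrow> 'a) \<Rightarrow> bool" where
  "regressive_S k f \<longleftrightarrow> (\<forall>A\<in>S_k k UNIV. f A < Min A \<or> Min A = ord_zero)"

definition k_ineffable' :: "nat \<Rightarrow> 'a::wellorder itself \<Rightarrow> bool" where
  "k_ineffable' k T \<longleftrightarrow> is_infinite_cardinal T \<and>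
     (\<forall>f::'a set \<Rightarrow> 'a. regressive_S k f \<longrightarrow>
        (\<exists>A. stationary A \<and> (\<exists>c. \<forall>X\<in>S_k k A. f X = c)))"

text \<open>Elements of lambda^k are lists of length k; min and |.| are the least and
  greatest coordinates.\<close>
definition regressive_values ::
  "nat \<Rightarrow> ('a::wellorder list \<Rightarrow> 'a list) \<Rightarrow> 'a set \<Rightarrow> 'a list set" where
  "regressive_values k g B = {y. \<exists>x. length x = k \<and> set x \<subseteq> B \<and> y = g x \<and>
       Max (set y) < Min (set x)}"

definition order_type_nat :: "nat list \<Rightarrow> (nat \<times> nat) set" where
  "order_type_nat x = {(i, j). i < length x \<and> j < length x \<and> x ! i < x ! j}"

definition ot :: "nat \<Rightarrow> nat" where
  "ot k = card {order_type_nat x | x. length x = k}"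

end

theory Submission
  imports Defs
begin

text \<open>If \<open>\<lambda>\<close> is \<open>k\<close>-ineffable', a regressive ordinal-valued function on \<open>S\<^sub>k(\<lambda>)\<close> is
  constant on \<open>S\<^sub>k(A)\<close> for a stationary, hence unbounded, \<open>A\<close>. The same holds for regressive
  functions with values in tuples, even for finitely many of them at once: below a closure
  point \<open>\<alpha>\<close> of an injective pairing \<open>p : \<lambda> \<times> \<lambda> \<rightarrow> \<lambda>\<close>, tuples of ordinals \<open>< \<alpha>\<close> are coded
  by single ordinals \<open>< \<alpha>\<close>, and these closure points form a club because ineffability forces
  \<open>\<lambda>\<close> to be regular and of uncountable cofinality.

  On an unbounded \<open>B\<close>, every \<open>x \<in> B\<^sup>k\<close> is read off from a \<open>k\<close>-element \<open>X \<subseteq> B\<close> with the same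
  minimum as the elements of \<open>X\<close> of ranks \<open>\<tau>\<close>, where the rank pattern \<open>\<tau>\<close> of \<open>x\<close> is one of
  at most \<open>ot(k)\<close> patterns. Making \<open>X \<mapsto> g(x\<^sub>\<tau>(X))\<close> (where regressive) homogeneous on \<open>B\<close> for
  all patterns \<open>\<tau>\<close> at once, all regressive values of \<open>g\<close> on \<open>B\<^sup>k\<close> occur among the values at
  one fixed \<open>X\<close>, one value per pattern.\<close>

lemma ord_zero_le: "ord_zero \<le> (x::'a::wellorder)"
  unfolding ord_zero_def by (rule Least_le) simp

lemma k_ineffable'_no_greatest:
  assumes "k_ineffable' k TYPE('a::wellorder)"
  shows "\<exists>w::'a. z < w"
proof (rule ccontr)
  assume "\<not> ?thesis"
  then have "{y. y < z} = UNIV - {z}" by (auto simp: not_less order.order_iff_strict)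
  moreover have "infinite (UNIV::'a set)"
    using assms unfolding k_ineffable'_def is_infinite_cardinal_def by blast
  then have "UNIV - {z} \<approx> (UNIV::'a set)"
    using infinite_insert_eqpoll[of "UNIV - {z}" z] eqpoll_sym by (simp add: insert_Diff)
  ultimately have "{y. y < z} \<approx> (UNIV::'a set)" by simp
  with assms show False unfolding k_ineffable'_def is_infinite_cardinal_def by blast
qed

definition unbounded :: "'a::wellorder set \<Rightarrow> bool" where
  "unbounded A \<longleftrightarrow> (\<forall>z. \<exists>a\<in>A. z < a)"

lemma unbounded_imp_infinite: "unbounded (A::'a::wellorder set) \<Longrightarrow> infinite A"
  unfolding unbounded_def by (metis Max_ge leD)

lemma unbounded_extend_above:
  assumes "unbounded (B::'a::wellorder set)" "S \<subseteq> B" "finite S" "card S \<le> k"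
  shows "\<exists>X\<in>S_k k B. S \<subseteq> X \<and> (\<forall>z\<in>X - S. \<forall>s\<in>S. s < z)"
proof -
  have "unbounded {b\<in>B. \<forall>s\<in>S. s < b}"
    unfolding unbounded_def
  proof
    fix z
    obtain a where "a \<in> B" "Max (insert z S) < a" using assms(1) unfolding unbounded_def by blast
    then show "\<exists>a\<in>{b\<in>B. \<forall>s\<in>S. s < b}. z < a" using assms(3) by auto
  qed
  then obtain Y where Y: "finite Y" "card Y = k - card S" "Y \<subseteq> {b\<in>B. \<forall>s\<in>S. s < b}"
    using unbounded_imp_infinite infinite_arbitrarily_large by meson
  then have "S \<inter> Y = {}" by auto
  then have "card (S \<union> Y) = k" using card_Un_disjoint[OF assms(3) Y(1)] Y(2) assms(4) by simp
  then show ?thesis using Y assms(2,3) unfolding S_k_def by (intro bexI[of _ "S \<union> Y"]) auto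
qed

lemma club_Int_greaterThan:
  assumes "club (C::'a::wellorder set)" "\<And>z::'a. \<exists>w. z < w"
  shows "club (C \<inter> {t<..})"
  unfolding club_def
proof (intro conjI allI impI)
  fix a
  obtain w where "t < w" using assms(2) by blast
  obtain b where "b \<in> C" "max a w \<le> b" using assms(1) unfolding club_def by blast
  then show "\<exists>b\<in>C \<inter> {t<..}. a \<le> b" using \<open>t < w\<close> by auto
next
  fix a
  assume a: "is_limit a \<and> (\<forall>b<a. \<exists>c\<in>C \<inter> {t<..}. b \<le> c \<and> c < a)"
  then have "\<forall>b<a. \<exists>c\<in>C. b \<le> c \<and> c < a" by blast
  then have "a \<in> C" using assms(1) a unfolding club_def by blast
  have "ord_zero < a" using a ord_zero_le[of a] unfolding is_limit_def by auto
  then show "a \<in> C \<inter> {t<..}" using a \<open>a \<in> C\<close> by fastforce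
qed

lemma stationary_Int_club_unbounded:
  assumes "stationary A" "club (C::'a::wellorder set)" "\<And>z::'a. \<exists>w. z < w"
  shows "unbounded (A \<inter> C)"
  unfolding unbounded_def
proof
  fix z
  have "A \<inter> (C \<inter> {z<..}) \<noteq> {}"
    using club_Int_greaterThan[OF assms(2,3)] assms(1) unfolding stationary_def by blast
  then show "\<exists>a\<in>A \<inter> C. z < a" by auto
qed

lemma regressive_constant_on_unbounded:
  assumes "0 < k" "k_ineffable' k TYPE('a::wellorder)"
    and "\<And>\<alpha>::'a. f \<alpha> < \<alpha> \<or> \<alpha> = ord_zero"
  shows "\<exists>A c. unbounded A \<and> (\<forall>\<alpha>\<in>A. f \<alpha> = c)"
proof -
  have "regressive_S k (\<lambda>X. f (Min X))" unfolding regressive_S_def using assms(3) by blast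
  then obtain A c where A: "stationary A" "\<forall>X\<in>S_k k A. f (Min X) = c"
    using assms(2) unfolding k_ineffable'_def by blast
  have "club (UNIV::'a set)" unfolding club_def by blast
  then have "unbounded A"
    using stationary_Int_club_unbounded[OF A(1)] k_ineffable'_no_greatest[OF assms(2)]
    by (metis Int_UNIV_right)
  moreover have "f \<alpha> = c" if \<alpha>: "\<alpha> \<in> A" for \<alpha>
  proof -
    obtain X where X: "X \<in> S_k k A" "\<alpha> \<in> X" "\<forall>z\<in>X - {\<alpha>}. \<alpha> < z"
      using unbounded_extend_above[OF \<open>unbounded A\<close>, of "{\<alpha>}" k] \<alpha> assms(1) by auto
    then have "Min X = \<alpha>" unfolding S_k_def by (intro Min_eqI) (auto simp: order.order_iff_strict)
    then show ?thesis using A(2) X(1) by blast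
  qed
  ultimately show ?thesis by blast
qed

text \<open>If \<open>h\<close> were unbounded on \<open>D\<close>, then \<open>\<alpha> \<mapsto>\<close> the least \<open>e d\<close> with \<open>\<alpha> \<le> h d\<close> would be
  regressive above \<open>\<beta>\<close>, hence constant on an unbounded set; but a single \<open>h d\<close> cannot lie
  above unboundedly many \<open>\<alpha>\<close>.\<close>
lemma bounded_on_small_set:
  fixes h :: "'b \<Rightarrow> 'a::wellorder" and e :: "'b \<Rightarrow> 'a"
  assumes "0 < k" "k_ineffable' k TYPE('a)" "inj_on e D" "\<forall>d\<in>D. e d < \<beta>"
  shows "\<exists>z. \<forall>d\<in>D. h d < z"
proof (rule ccontr)
  assume "\<not> ?thesis"
  then have "\<exists>w. \<exists>d\<in>D. e d = w \<and> \<alpha> \<le> h d" for \<alpha> by (meson not_less)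
  define f where "f \<alpha> = (if \<beta> < \<alpha> then (LEAST w. \<exists>d\<in>D. e d = w \<and> \<alpha> \<le> h d) else ord_zero)" for \<alpha>
  have f: "\<exists>d\<in>D. e d = f \<alpha> \<and> \<alpha> \<le> h d" if "\<beta> < \<alpha>" for \<alpha>
    using LeastI_ex[OF \<open>\<exists>w. \<exists>d\<in>D. e d = w \<and> \<alpha> \<le> h d\<close>] that unfolding f_def by simp
  have "f \<alpha> < \<alpha> \<or> \<alpha> = ord_zero" for \<alpha>
  proof (cases "\<beta> < \<alpha>")
    case True
    then show ?thesis using f assms(4) by (metis less_trans)
  next
    case False
    then show ?thesis unfolding f_def using ord_zero_le[of \<alpha>] by (auto simp: order.order_iff_strict)
  qed
  then obtain A c where A: "unbounded A" "\<forall>\<alpha>\<in>A. f \<alpha> = c"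
    using regressive_constant_on_unbounded[OF assms(1,2)] by blast
  obtain \<alpha>0 where "\<alpha>0 \<in> A" "\<beta> < \<alpha>0" using A(1) unfolding unbounded_def by blast
  then obtain d0 where d0: "d0 \<in> D" "e d0 = c" using f[of \<alpha>0] A(2) by auto
  obtain \<alpha>1 where \<alpha>1: "\<alpha>1 \<in> A" "max \<beta> (h d0) < \<alpha>1" using A(1) unfolding unbounded_def by blast
  then obtain d1 where "d1 \<in> D" "e d1 = c" "\<alpha>1 \<le> h d1" using f[of \<alpha>1] A(2) by auto
  then show False using assms(3) d0 \<alpha>1(2) unfolding inj_on_def by (metis leD max_less_iff_conj)
qed

text \<open>Otherwise \<open>\<alpha> \<mapsto>\<close> the last \<open>a n\<close> below \<open>\<alpha>\<close> would be regressive, hence constant on an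
  unbounded set, which however meets two different intervals \<open>(a n, a (n + 1)]\<close>.\<close>
lemma strict_mono_bounded:
  fixes a :: "nat \<Rightarrow> 'a::wellorder"
  assumes "0 < k" "k_ineffable' k TYPE('a)" "strict_mono a"
  shows "\<exists>z. \<forall>n. a n < z"
proof (rule ccontr)
  assume "\<not> ?thesis"
  then have ub: "\<exists>n. \<alpha> \<le> a n" for \<alpha> by (meson not_less)
  define N where "N \<alpha> = (LEAST n. \<alpha> \<le> a (Suc n))" for \<alpha>
  define f where "f \<alpha> = (if a 0 < \<alpha> then a (N \<alpha>) else ord_zero)" for \<alpha>
  have N: "a (N \<alpha>) < \<alpha> \<and> \<alpha> \<le> a (Suc (N \<alpha>))" if "a 0 < \<alpha>" for \<alpha>
  proof -
    obtain m where m: "\<alpha> \<le> a m" using ub by blast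
    with that have "m \<noteq> 0" by (metis leD)
    then have ex: "\<exists>n. \<alpha> \<le> a (Suc n)" using m by (intro exI[of _ "m - 1"]) simp
    have "a (N \<alpha>) < \<alpha>"
    proof (cases "N \<alpha> = 0")
      case False
      then have "\<not> \<alpha> \<le> a (Suc (N \<alpha> - 1))" unfolding N_def by (intro not_less_Least) auto
      then show ?thesis using False by simp
    qed (use that in simp)
    then show ?thesis using LeastI_ex[OF ex] unfolding N_def by simp
  qed
  have "f \<alpha> < \<alpha> \<or> \<alpha> = ord_zero" for \<alpha>
    using N ord_zero_le[of \<alpha>] unfolding f_def by (auto simp: order.order_iff_strict)
  then obtain A c where A: "unbounded A" "\<forall>\<alpha>\<in>A. f \<alpha> = c"
    using regressive_constant_on_unbounded[OF assms(1,2)] by blast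
  obtain \<alpha>0 where \<alpha>0: "\<alpha>0 \<in> A" "a 0 < \<alpha>0" using A(1) unfolding unbounded_def by blast
  obtain \<alpha>1 where \<alpha>1: "\<alpha>1 \<in> A" "max (a 0) (a (Suc (N \<alpha>0))) < \<alpha>1"
    using A(1) unfolding unbounded_def by blast
  have "a 0 < \<alpha>1" using \<alpha>1(2) by simp
  then have "a (N \<alpha>1) = a (N \<alpha>0)"
    using A(2)[rule_format, OF \<alpha>0(1)] A(2)[rule_format, OF \<alpha>1(1)] \<alpha>0(2) unfolding f_def by simp
  then have "\<alpha>1 \<le> a (Suc (N \<alpha>0))" using N[OF \<open>a 0 < \<alpha>1\<close>] strict_mono_eq[OF assms(3)] by simp
  then show False using \<alpha>1(2) leD by auto
qed

lemma bounded_on_square: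
  fixes p :: "'a \<times> 'a \<Rightarrow> 'a::wellorder"
  assumes "0 < k" "k_ineffable' k TYPE('a)"
  shows "\<exists>z. \<forall>x y. x \<le> a \<longrightarrow> y \<le> a \<longrightarrow> p (x, y) < z"
proof (cases "finite {..a}")
  case True
  then have "finite (p ` ({..a} \<times> {..a}))" by simp
  then obtain z where "Max (insert a (p ` ({..a} \<times> {..a}))) < z"
    using k_ineffable'_no_greatest[OF assms(2)] by blast
  then show ?thesis using \<open>finite (p ` _)\<close> by auto
next
  case False
  then obtain e where e: "bij_betw e ({..a} \<times> {..a}) {..a}"
    using card_of_Times_same_infinite card_of_ordIso by blast
  obtain s where "a < s" using k_ineffable'_no_greatest[OF assms(2)] by blast
  then have "\<forall>d\<in>{..a} \<times> {..a}. e d < s" using bij_betw_apply[OF e] by fastforce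
  then obtain z where "\<forall>d\<in>{..a} \<times> {..a}. p d < z"
    using bounded_on_small_set[OF assms, of e _ s p] e unfolding bij_betw_def by blast
  then show ?thesis by auto
qed

definition closure_points :: "('a \<times> 'a \<Rightarrow> 'a) \<Rightarrow> 'a::wellorder set" where
  "closure_points p = {\<alpha>. \<forall>x y. x < \<alpha> \<longrightarrow> y < \<alpha> \<longrightarrow> p (x, y) < \<alpha>}"

lemma closure_point_above:
  fixes p :: "'a \<times> 'a \<Rightarrow> 'a::wellorder"
  assumes "0 < k" "k_ineffable' k TYPE('a)"
  shows "\<exists>\<alpha>\<in>closure_points p. t \<le> \<alpha>"
proof -
  define step where
    "step b = (LEAST z. b < z \<and> (\<forall>x y. x \<le> b \<longrightarrow> y \<le> b \<longrightarrow> p (x, y) < z))" for b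
  have step: "b < step b \<and> (\<forall>x y. x \<le> b \<longrightarrow> y \<le> b \<longrightarrow> p (x, y) < step b)" for b
  proof -
    obtain z where "\<forall>x y. x \<le> b \<longrightarrow> y \<le> b \<longrightarrow> p (x, y) < z" using bounded_on_square[OF assms] by blast
    moreover obtain w where "b < w" using k_ineffable'_no_greatest[OF assms(2)] by blast
    ultimately have "\<exists>z. b < z \<and> (\<forall>x y. x \<le> b \<longrightarrow> y \<le> b \<longrightarrow> p (x, y) < z)"
      by (intro exI[of _ "max z w"]) (simp add: less_max_iff_disj)
    from LeastI_ex[OF this] show ?thesis unfolding step_def .
  qed
  define a where "a n = (step ^^ n) t" for n
  have "strict_mono a" unfolding strict_mono_Suc_iff a_def using step by simp
  then obtain z where "\<forall>n. a n < z" using strict_mono_bounded[OF assms] by blast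
  define \<alpha> where "\<alpha> = (LEAST z. \<forall>n. a n \<le> z)"
  have "\<exists>z. \<forall>n. a n \<le> z" using \<open>\<forall>n. a n < z\<close> less_imp_le by blast
  from LeastI_ex[OF this] have a_le: "a n \<le> \<alpha>" for n unfolding \<alpha>_def by blast
  have below: "\<exists>n. x < a n" if "x < \<alpha>" for x
  proof (rule ccontr)
    assume "\<not> (\<exists>n. x < a n)"
    then have "\<alpha> \<le> x" unfolding \<alpha>_def by (intro Least_le) (simp add: not_less)
    then show False using that by simp
  qed
  have "\<alpha> \<in> closure_points p"
    unfolding closure_points_def
  proof (intro CollectI allI impI)
    fix x y assume "x < \<alpha>" "y < \<alpha>"
    then obtain n m where "x < a n" "y < a m" using below by blast
    moreover have "a n \<le> a (max n m)" "a m \<le> a (max n m)"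
      using strict_mono_less_eq[OF \<open>strict_mono a\<close>] by simp_all
    ultimately have "x \<le> a (max n m)" "y \<le> a (max n m)" by simp_all
    then have "p (x, y) < a (Suc (max n m))" using step unfolding a_def by simp
    then show "p (x, y) < \<alpha>" using a_le by (meson less_le_trans)
  qed
  moreover have "t \<le> \<alpha>" using a_le[of 0] unfolding a_def by simp
  ultimately show ?thesis by blast
qed

lemma club_closure_points:
  fixes p :: "'a \<times> 'a \<Rightarrow> 'a::wellorder"
  assumes "0 < k" "k_ineffable' k TYPE('a)"
  shows "club (closure_points p)"
  unfolding club_def
proof (intro conjI allI impI)
  show "\<exists>\<alpha>\<in>closure_points p. t \<le> \<alpha>" for t using closure_point_above[OF assms] .
next
  fix \<alpha> :: 'a
  assume \<alpha>: "is_limit \<alpha> \<and> (\<forall>b<\<alpha>. \<exists>c\<in>closure_points p. b \<le> c \<and> c < \<alpha>)"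
  show "\<alpha> \<in> closure_points p"
    unfolding closure_points_def
  proof (intro CollectI allI impI)
    fix x y assume "x < \<alpha>" "y < \<alpha>"
    then obtain c' where "max x y < c'" "c' < \<alpha>" using \<alpha> unfolding is_limit_def by (meson max_less_iff_conj)
    then obtain c where "c \<in> closure_points p" "x < c" "y < c" "c < \<alpha>" using \<alpha> by fastforce
    then show "p (x, y) < \<alpha>" unfolding closure_points_def by (blast intro: less_trans)
  qed
qed

fun code :: "('a \<times> 'a \<Rightarrow> 'a) \<Rightarrow> 'a::wellorder list \<Rightarrow> 'a" where
  "code p [] = ord_zero"
| "code p (x # l) = p (x, code p l)"

lemma code_less_closure_point:
  assumes "\<alpha> \<in> closure_points p" "ord_zero < \<alpha>" "\<forall>x\<in>set l. x < \<alpha>"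
  shows "code p l < \<alpha>"
  using assms(3)
proof (induction l)
  case (Cons x l)
  then have "x < \<alpha>" "code p l < \<alpha>" by simp_all
  then show ?case using assms(1) unfolding closure_points_def by simp
qed (simp add: assms(2))

lemma code_inj:
  assumes "inj p"
  shows "length l1 = length l2 \<Longrightarrow> code p l1 = code p l2 \<Longrightarrow> l1 = l2"
proof (induction l1 arbitrary: l2)
  case (Cons x l)
  then obtain y l' where l2: "l2 = y # l'" by (cases l2) auto
  then have "p (x, code p l) = p (y, code p l')" using Cons.prems by simp
  then have "x = y" "code p l = code p l'" using assms by (simp_all add: inj_eq)
  then show ?case using Cons l2 by simp
qed simp

lemma ex_inj_pairing:
  assumes "infinite (UNIV::'a set)"
  shows "\<exists>p::'a \<times> 'a \<Rightarrow> 'a. inj p"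
proof -
  have "\<exists>p. bij_betw p ((UNIV::'a set) \<times> (UNIV::'a set)) (UNIV::'a set)"
    using card_of_Times_same_infinite[OF assms]
      card_of_ordIso[of "(UNIV::'a set) \<times> (UNIV::'a set)" "UNIV::'a set"]
    by simp
  then show ?thesis by (metis bij_betw_imp_inj_on UNIV_Times_UNIV)
qed

lemma regressive_lists_homogeneous:
  fixes G :: "'a::wellorder set \<Rightarrow> 'a list"
  assumes "0 < k" "k_ineffable' k TYPE('a)"
    and "\<And>X. length (G X) = n"
    and "\<And>X. X \<in> S_k k UNIV \<Longrightarrow> Min X \<noteq> ord_zero \<Longrightarrow> \<forall>a\<in>set (G X). a < Min X"
  shows "\<exists>B. unbounded B \<and> (\<forall>X\<in>S_k k B. \<forall>Y\<in>S_k k B. G X = G Y)"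
proof -
  have "infinite (UNIV::'a set)"
    using assms(2) unfolding k_ineffable'_def is_infinite_cardinal_def by blast
  then obtain p :: "'a \<times> 'a \<Rightarrow> 'a" where p: "inj p" using ex_inj_pairing by blast
  let ?C = "closure_points p \<inter> {ord_zero<..}"
  define F where "F X = (if Min X \<in> ?C then code p (G X) else ord_zero)" for X
  have "regressive_S k F"
    unfolding regressive_S_def
  proof
    fix X :: "'a set" assume X: "X \<in> S_k k UNIV"
    show "F X < Min X \<or> Min X = ord_zero"
    proof (cases "Min X \<in> ?C")
      case True
      then have "code p (G X) < Min X"
        using code_less_closure_point[of "Min X" p "G X"] assms(4)[OF X] by auto
      then show ?thesis using True unfolding F_def by simp
    next
      case False
      then show ?thesis using ord_zero_le[of "Min X"] unfolding F_def by (auto simp: order.order_iff_strict)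
    qed
  qed
  then obtain A c where A: "stationary A" "\<forall>X\<in>S_k k A. F X = c"
    using assms(2) unfolding k_ineffable'_def by blast
  have no_greatest: "\<And>z::'a. \<exists>w. z < w" using k_ineffable'_no_greatest[OF assms(2)] .
  have "club ?C" using club_Int_greaterThan[OF club_closure_points[OF assms(1,2)] no_greatest] .
  then have "unbounded (A \<inter> ?C)" using stationary_Int_club_unbounded[OF A(1) _ no_greatest] by blast
  moreover have "G X = G Y" if "X \<in> S_k k (A \<inter> ?C)" "Y \<in> S_k k (A \<inter> ?C)" for X Y
  proof -
    have "code p (G Z) = c" if "Z \<in> S_k k (A \<inter> ?C)" for Z
    proof -
      have "Z \<noteq> {}" "finite Z" "Z \<subseteq> A \<inter> ?C" using that assms(1) unfolding S_k_def by auto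
      then have "Min Z \<in> ?C" "Z \<in> S_k k A" using that Min_in unfolding S_k_def by blast+
      moreover from \<open>Z \<in> S_k k A\<close> have "F Z = c" using A(2) by blast
      ultimately show ?thesis unfolding F_def by simp
    qed
    then have "code p (G X) = code p (G Y)" using that by simp
    then show ?thesis using code_inj[OF p, of "G X" "G Y"] assms(3) by simp
  qed
  ultimately show ?thesis by blast
qed

lemma regressive_families_homogeneous:
  fixes H :: "'i \<Rightarrow> 'a::wellorder set \<Rightarrow> 'a list"
  assumes "0 < k" "k_ineffable' k TYPE('a)" "finite I"
    and "\<And>i X. i \<in> I \<Longrightarrow> length (H i X) = n"
    and "\<And>i X. i \<in> I \<Longrightarrow> X \<in> S_k k UNIV \<Longrightarrow> Min X \<noteq> ord_zero \<Longrightarrow> \<forall>a\<in>set (H i X). a < Min X"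
  shows "\<exists>B. unbounded B \<and> (\<forall>i\<in>I. \<forall>X\<in>S_k k B. \<forall>Y\<in>S_k k B. H i X = H i Y)"
proof -
  obtain idx where idx: "set idx = I" using finite_list[OF assms(3)] by blast
  define G where "G X = concat (map (\<lambda>i. H i X) idx)" for X
  have G_length: "length (G X) = length idx * n" for X
  proof -
    have lengths: "map (length \<circ> (\<lambda>i. H i X)) idx = map (\<lambda>_. n) idx" using idx assms(4) by simp
    show ?thesis unfolding G_def length_concat map_map lengths by (simp add: sum_list_triv)
  qed
  have G_regressive: "\<forall>a\<in>set (G X). a < Min X" if "X \<in> S_k k UNIV" "Min X \<noteq> ord_zero" for X
    unfolding G_def using idx assms(5) that by auto
  obtain B where B: "unbounded B" "\<forall>X\<in>S_k k B. \<forall>Y\<in>S_k k B. G X = G Y"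
    using regressive_lists_homogeneous[OF assms(1,2) G_length G_regressive] by blast
  moreover have "H i X = H i Y" if "i \<in> I" "X \<in> S_k k B" "Y \<in> S_k k B" for i X Y
  proof -
    have "map (\<lambda>i. H i X) idx = map (\<lambda>i. H i Y) idx"
    proof (rule concat_injective)
      show "concat (map (\<lambda>i. H i X) idx) = concat (map (\<lambda>i. H i Y) idx)"
        using B(2) that(2,3) unfolding G_def by blast
      show "\<forall>(u, v)\<in>set (zip (map (\<lambda>i. H i X) idx) (map (\<lambda>i. H i Y) idx)). length u = length v"
        using idx assms(4) by (simp add: zip_map_map zip_same_conv_map)
    qed simp
    then show ?thesis using idx that(1) by auto
  qed
  ultimately show ?thesis by blast
qed

definition rank_in :: "'a::linorder set \<Rightarrow> 'a \<Rightarrow> nat" where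
  "rank_in X v = card {u\<in>X. u < v}"

definition elem_of_rank :: "'a::linorder set \<Rightarrow> nat \<Rightarrow> 'a" where
  "elem_of_rank X n = (THE v. v \<in> X \<and> rank_in X v = n)"

lemma strict_mono_on_rank_in:
  assumes "finite X"
  shows "strict_mono_on X (rank_in X)"
proof (rule strict_mono_onI)
  fix v w assume "v \<in> X" "w \<in> X" "v < w"
  then have "{u\<in>X. u < v} \<subset> {u\<in>X. u < w}" by auto
  then show "rank_in X v < rank_in X w" unfolding rank_in_def using assms by (intro psubset_card_mono) auto
qed

lemma rank_in_image:
  assumes "finite X"
  shows "rank_in X ` X = {0..<card X}"
proof (rule card_subset_eq)
  have "rank_in X v < card X" if "v \<in> X" for v
    unfolding rank_in_def using assms that by (intro psubset_card_mono) auto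
  then show "rank_in X ` X \<subseteq> {0..<card X}" by auto
  show "card (rank_in X ` X) = card {0..<card X}"
    using card_image[OF strict_mono_on_imp_inj_on[OF strict_mono_on_rank_in[OF assms]]] by simp
qed simp

lemma elem_of_rank_rank_in:
  assumes "finite X" "v \<in> X"
  shows "elem_of_rank X (rank_in X v) = v"
  unfolding elem_of_rank_def
  using assms strict_mono_on_imp_inj_on[OF strict_mono_on_rank_in[OF assms(1)]]
  by (intro the_equality) (auto dest: inj_onD)

lemma rank_in_upward_extension:
  assumes "S \<subseteq> X" "\<forall>z\<in>X - S. \<forall>s\<in>S. s < z" "v \<in> S"
  shows "rank_in X v = rank_in S v"
proof -
  have "{u\<in>X. u < v} = {u\<in>S. u < v}" using assms less_asym by fastforce
  then show ?thesis unfolding rank_in_def by simp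
qed

text \<open>A rank pattern lists the ranks of the entries of a tuple within the set of its
  entries; it is determined by the order type of the tuple.\<close>
definition rank_patterns :: "nat \<Rightarrow> nat list set" where
  "rank_patterns k = {\<tau>. length \<tau> = k \<and> set \<tau> = {0..<card (set \<tau>)}}"

lemma finite_rank_patterns: "finite (rank_patterns k)"
proof (rule finite_subset)
  show "rank_patterns k \<subseteq> {\<tau>. set \<tau> \<subseteq> {0..<k} \<and> length \<tau> = k}"
  proof
    fix \<tau> assume "\<tau> \<in> rank_patterns k"
    then have "length \<tau> = k" "set \<tau> = {0..<card (set \<tau>)}" unfolding rank_patterns_def by auto
    moreover from this have "set \<tau> \<subseteq> {0..<k}"
      using card_length[of \<tau>] by (metis atLeastLessThan_iff less_le_trans subsetI)
    ultimately show "\<tau> \<in> {\<tau>. set \<tau> \<subseteq> {0..<k} \<and> length \<tau> = k}" by simp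
  qed
  show "finite {\<tau>. set \<tau> \<subseteq> {0..<k} \<and> length \<tau> = k}" by (rule finite_lists_length_eq) simp
qed

lemma rank_pattern_of_list: "map (rank_in (set x)) x \<in> rank_patterns (length x)"
  using rank_in_image[of "set x"] unfolding rank_patterns_def by simp

lemma values_below_nth:
  fixes \<tau> :: "nat list"
  assumes "set \<tau> = {0..<m}" "i < length \<tau>"
  shows "{\<tau>!j | j. j < length \<tau> \<and> \<tau>!j < \<tau>!i} = {0..<\<tau>!i}"
proof (rule set_eqI, rule iffI)
  fix n assume "n \<in> {0..<\<tau>!i}"
  moreover have "\<tau>!i < m" using assms nth_mem by fastforce
  ultimately have "n \<in> set \<tau>" using assms(1) by simp
  with \<open>n \<in> {0..<\<tau>!i}\<close> show "n \<in> {\<tau>!j | j. j < length \<tau> \<and> \<tau>!j < \<tau>!i}"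
    by (auto simp: in_set_conv_nth)
qed auto

lemma inj_on_order_type_nat: "inj_on order_type_nat (rank_patterns k)"
proof (rule inj_onI)
  fix \<tau> \<sigma> assume "\<tau> \<in> rank_patterns k" "\<sigma> \<in> rank_patterns k" and eq: "order_type_nat \<tau> = order_type_nat \<sigma>"
  then have \<tau>: "length \<tau> = k" "set \<tau> = {0..<card (set \<tau>)}"
    and \<sigma>: "length \<sigma> = k" "set \<sigma> = {0..<card (set \<sigma>)}" unfolding rank_patterns_def by auto
  have less_iff: "\<tau>!j < \<tau>!i \<longleftrightarrow> \<sigma>!j < \<sigma>!i" if "i < k" "j < k" for i j
    using eq[THEN equalityD1, THEN subsetD, of "(j, i)"] eq[THEN equalityD2, THEN subsetD, of "(j, i)"]
      that \<tau>(1) \<sigma>(1) unfolding order_type_nat_def by auto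
  have "\<sigma>!i = n" if "i < k" "\<tau>!i = n" for i n
    using that
  proof (induction n arbitrary: i rule: less_induct)
    case (less n)
    have same: "\<sigma>!j = \<tau>!j" if "j < k" "\<tau>!j < \<tau>!i" for j
      using less.IH[of "\<tau>!j" j] less.prems(2) that by simp
    have "{\<sigma>!j | j. j < k \<and> \<sigma>!j < \<sigma>!i} = {\<tau>!j | j. j < k \<and> \<tau>!j < \<tau>!i}"
      using same less_iff[OF less.prems(1)] by fastforce
    then have "{0..<\<sigma>!i} = {0..<n}"
      using values_below_nth[OF \<sigma>(2), of i] values_below_nth[OF \<tau>(2), of i] less.prems \<tau>(1) \<sigma>(1)
      by simp
    then show ?case by (metis atLeast0LessThan lessThan_eq_iff)
  qed
  then show "\<tau> = \<sigma>" using \<tau>(1) \<sigma>(1) by (simp add: nth_equalityI)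
qed

lemma card_rank_patterns_le_ot: "card (rank_patterns k) \<le> ot k"
  unfolding ot_def
proof (rule card_inj_on_le[OF inj_on_order_type_nat])
  show "order_type_nat ` rank_patterns k \<subseteq> {order_type_nat x | x. length x = k}"
    unfolding rank_patterns_def by auto
  have "{order_type_nat x | x. length x = k} \<subseteq> Pow ({0..<k} \<times> {0..<k})"
    unfolding order_type_nat_def by auto
  then show "finite {order_type_nat x | x. length x = k}" by (rule finite_subset) simp
qed

lemma unbounded_realizes_list:
  fixes B :: "'a::wellorder set"
  assumes "unbounded B" "set x \<subseteq> B" "x \<noteq> []"
  shows "\<exists>X\<in>S_k (length x) B. \<exists>\<tau>\<in>rank_patterns (length x).
           map (elem_of_rank X) \<tau> = x \<and> Min X = Min (set x)"
proof -
  obtain X where X: "X \<in> S_k (length x) B" "set x \<subseteq> X" "\<forall>z\<in>X - set x. \<forall>s\<in>set x. s < z"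
    using unbounded_extend_above[OF assms(1,2) List.finite_set card_length] by blast
  then have "finite X" unfolding S_k_def by blast
  have "elem_of_rank X (rank_in (set x) v) = v" if "v \<in> set x" for v
    using rank_in_upward_extension[OF X(2,3) that] elem_of_rank_rank_in[OF \<open>finite X\<close>, of v] that X(2)
    by auto
  then have "map (elem_of_rank X) (map (rank_in (set x)) x) = x" by (simp add: map_idI)
  moreover have "Min X = Min (set x)"
  proof (rule Min_eqI[OF \<open>finite X\<close>])
    show "Min (set x) \<in> X" using X(2) assms(3) by auto
    show "Min (set x) \<le> z" if "z \<in> X" for z
      using that X(3) assms(3) by (cases "z \<in> set x") (auto intro: less_imp_le)
  qed
  ultimately show ?thesis using X(1) rank_pattern_of_list by blast
qed

text \<open>Non-regressive values are replaced by a regressive dummy of the same length.\<close>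
definition pattern_value ::
  "nat \<Rightarrow> ('a::wellorder list \<Rightarrow> 'a list) \<Rightarrow> nat list \<Rightarrow> 'a set \<Rightarrow> 'a list" where
  "pattern_value k g \<tau> X = (let y = g (map (elem_of_rank X) \<tau>) in
     if Max (set y) < Min X then y else replicate k ord_zero)"

lemma length_pattern_value:
  assumes "\<forall>x. length x = k \<longrightarrow> length (g x) = k" "\<tau> \<in> rank_patterns k"
  shows "length (pattern_value k g \<tau> X) = k"
  using assms unfolding pattern_value_def rank_patterns_def by (simp add: Let_def)

lemma pattern_value_regressive:
  assumes "Min X \<noteq> ord_zero"
  shows "\<forall>a\<in>set (pattern_value k g \<tau> X). a < Min X"
  using assms ord_zero_le[of "Min X"]
  unfolding pattern_value_def Let_def by (auto intro: le_less_trans[OF Max_ge[OF List.finite_set]])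

lemma regressive_values_subset_pattern_values:
  assumes "0 < k" "unbounded B"
    and "\<forall>\<tau>\<in>rank_patterns k. \<forall>X\<in>S_k k B. pattern_value k g \<tau> X = pattern_value k g \<tau> X0"
  shows "regressive_values k g B \<subseteq> (\<lambda>\<tau>. pattern_value k g \<tau> X0) ` rank_patterns k"
proof
  fix y assume "y \<in> regressive_values k g B"
  then obtain x where x: "length x = k" "set x \<subseteq> B" "y = g x" "Max (set y) < Min (set x)"
    unfolding regressive_values_def by blast
  from x(1) assms(1) have "x \<noteq> []" by auto
  then obtain X \<tau> where X: "X \<in> S_k k B" and \<tau>: "\<tau> \<in> rank_patterns k"
    and "map (elem_of_rank X) \<tau> = x" "Min X = Min (set x)"
    using unbounded_realizes_list[OF assms(2) x(2)] x(1) by blast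
  then have "y = pattern_value k g \<tau> X" using x(3,4) unfolding pattern_value_def by simp
  also have "\<dots> = pattern_value k g \<tau> X0" using assms(3) X \<tau> by blast
  finally show "y \<in> (\<lambda>\<tau>. pattern_value k g \<tau> X0) ` rank_patterns k" using \<tau> by blast
qed

theorem lemma4p10:
  fixes k :: nat and g :: "'a::wellorder list \<Rightarrow> 'a list"
  assumes "k > 0"
    and "k_ineffable' k TYPE('a)"
    and "\<forall>x. length x = k \<longrightarrow> length (g x) = k"
  shows "\<exists>B::'a set. infinite B \<and> finite (regressive_values k g B) \<and>
           card (regressive_values k g B) \<le> ot k"
proof -
  have "\<exists>B::'a set. unbounded B \<and> (\<forall>\<tau>\<in>rank_patterns k. \<forall>X\<in>S_k k B. \<forall>Y\<in>S_k k B.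
          pattern_value k g \<tau> X = pattern_value k g \<tau> Y)"
    by (rule regressive_families_homogeneous[OF assms(1,2) finite_rank_patterns])
      (simp_all add: length_pattern_value[OF assms(3)] pattern_value_regressive)
  then obtain B :: "'a set" where B: "unbounded B" and homogeneous:
    "\<forall>\<tau>\<in>rank_patterns k. \<forall>X\<in>S_k k B. \<forall>Y\<in>S_k k B. pattern_value k g \<tau> X = pattern_value k g \<tau> Y"
    by blast
  obtain X0 where "X0 \<in> S_k k B"
    using infinite_arbitrarily_large[OF unbounded_imp_infinite[OF B]] unfolding S_k_def by blast
  then have sub: "regressive_values k g B \<subseteq> (\<lambda>\<tau>. pattern_value k g \<tau> X0) ` rank_patterns k"
    using regressive_values_subset_pattern_values[OF assms(1) B] homogeneous by blast
  have "finite (regressive_values k g B)" using finite_subset[OF sub] finite_rank_patterns by blast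
  have "card (regressive_values k g B) \<le> card ((\<lambda>\<tau>. pattern_value k g \<tau> X0) ` rank_patterns k)"
    by (rule card_mono[OF finite_imageI[OF finite_rank_patterns] sub])
  also have "\<dots> \<le> card (rank_patterns k)" by (rule card_image_le[OF finite_rank_patterns])
  also have "\<dots> \<le> ot k" by (rule card_rank_patterns_le_ot)
  finally show ?thesis using \<open>finite (regressive_values k g B)\<close> unbounded_imp_infinite[OF B] by blast
qed

end
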